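(* For integers $n\ge m\ge 2$, $$f(S_m,\overline{K_n})= n+\min_{k}\max\left\{k+\left\lceil\frac{n-1}{k}\right\rceil,\ 2m-3-k\right\},$$ where the minimum is over positive integers $k$.
   Context: All graphs are finite and simple. $S_m=K_{1,m-1}$ is the star with $m$ vertices; $\overline{K_n}$ is the edgeless graph on $n$ vertices. A graph $G$ is $(H_1,H_2)$-full if every vertex of $G$ belongs to an induced subgraph isomorphic to $H_1$ and to an induced subgraph isomorphic to $H_2$; $f(H_1,H_2)$ is the minimum order of an $(H_1,H_2)$-full graph. *)

theory Defs
  imports Complex_Main
begin

definition simple_graph :: "'a set \<Rightarrow> ('a \<Rightarrow> 'a \<Rightarrow> bool) \<Rightarrow> bool" where
  "simple_graph V E \<longleftrightarrow> finite V \<and> (\<forall>x y. E x y \<longrightarrow> x \<in> V \<and> y \<in> V)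
     \<and> (\<forall>x y. E x y \<longrightarrow> E y x) \<and> (\<forall>x. \<not> E x x)"

definition in_induced_copy ::
  "'a set \<Rightarrow> ('a \<Rightarrow> 'a \<Rightarrow> bool) \<Rightarrow> 'b set \<Rightarrow> ('b \<Rightarrow> 'b \<Rightarrow> bool) \<Rightarrow> 'a \<Rightarrow> bool" where
  "in_induced_copy V E W F v \<longleftrightarrow>
     (\<exists>U. U \<subseteq> V \<and> v \<in> U \<and>
        (\<exists>g. bij_betw g W U \<and> (\<forall>x\<in>W. \<forall>y\<in>W. F x y \<longleftrightarrow> E (g x) (g y))))"

text \<open>The star S_m = K_{1,m-1} on vertices {0..<m} with centre 0.\<close>
definition star_V :: "nat \<Rightarrow> nat set" where "star_V m = {0..<m}"
definition star_E :: "nat \<Rightarrow> nat \<Rightarrow> bool" where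
  "star_E x y \<longleftrightarrow> x \<noteq> y \<and> (x = 0 \<or> y = 0)"

definition empty_V :: "nat \<Rightarrow> nat set" where "empty_V n = {0..<n}"
definition empty_E :: "nat \<Rightarrow> nat \<Rightarrow> bool" where "empty_E x y \<longleftrightarrow> False"

definition is_full ::
  "'a set \<Rightarrow> ('a \<Rightarrow> 'a \<Rightarrow> bool) \<Rightarrow> 'b set \<Rightarrow> ('b \<Rightarrow> 'b \<Rightarrow> bool)
     \<Rightarrow> 'c set \<Rightarrow> ('c \<Rightarrow> 'c \<Rightarrow> bool) \<Rightarrow> bool" where
  "is_full V E W1 F1 W2 F2 \<longleftrightarrow> simple_graph V E \<and>
     (\<forall>v\<in>V. in_induced_copy V E W1 F1 v \<and> in_induced_copy V E W2 F2 v)"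

text \<open>Minimum order of a (nonempty) (H1,H2)-full graph; graphs are taken on vertex type nat,
  which loses no generality for finite graphs.\<close>
definition f_full :: "'b set \<Rightarrow> ('b \<Rightarrow> 'b \<Rightarrow> bool) \<Rightarrow> 'c set \<Rightarrow> ('c \<Rightarrow> 'c \<Rightarrow> bool) \<Rightarrow> nat" where
  "f_full W1 F1 W2 F2 = (LEAST N. \<exists>(V::nat set) E. V \<noteq> {} \<and> is_full V E W1 F1 W2 F2 \<and> card V = N)"

end

theory Submission
  imports Defs
begin

(*
  Let G be (S_m, K_n-bar)-full of order n + t. G has no isolated vertex, so every
  dominating set D yields a spanning star forest with at most |D| stars: repeatedly reassign
  leaves until every centre keeps a leaf. If there are q stars, an independent n-set through a
  centre meets its own star only in that centre and every other star in at most t + 1 - q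
  vertices, so n - 1 <= (q - 1) k with k = t + 1 - q, i.e. k + ceil((n-1)/k) <= t. A dominating
  set of size at most 2t - 2m + 4 is found from an induced star (centre c, leaves L) and an
  independent n-set J through c: take c, the t - m + 1 vertices outside J and L, and at most
  t - m + 2 vertices dominating those vertices of J whose neighbours all lie in L. Hence
  q <= 2t + 4 - 2m, i.e. 2m - 3 - k <= t.

  Take two sides, each with hubs and leaves; hubs on different sides are all
  adjacent, and each hub is adjacent to a window of k consecutive leaves of its own side, the
  windows of a side covering its leaves. A hub is the centre of a star formed by the other
  side's hubs and its window, and lies in an independent set with all leaves outside its
  window; the leaves form an independent set and each lies in a window. Balancing the numbers
  of hubs and leaves gives order n + max (k + ceil((n-1)/k)) (2m - 3 - k) for 1 <= k <= n - 1.
*)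

section \<open>Induced stars and independent sets\<close>

definition indep_set :: "('a \<Rightarrow> 'a \<Rightarrow> bool) \<Rightarrow> 'a set \<Rightarrow> bool" where
  "indep_set E J \<longleftrightarrow> (\<forall>x\<in>J. \<forall>y\<in>J. \<not> E x y)"

lemma indep_set_subset: "indep_set E J \<Longrightarrow> I \<subseteq> J \<Longrightarrow> indep_set E I"
  unfolding indep_set_def by blast

lemma in_induced_copy_emptyD:
  assumes "in_induced_copy V E (empty_V n) empty_E v"
  obtains J where "J \<subseteq> V" "v \<in> J" "finite J" "card J = n" "indep_set E J"
proof -
  obtain J g where J: "J \<subseteq> V" "v \<in> J" and g: "bij_betw g {0..<n} J"
    and edges: "\<forall>x\<in>{0..<n}. \<forall>y\<in>{0..<n}. empty_E x y \<longleftrightarrow> E (g x) (g y)"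
    using assms unfolding in_induced_copy_def empty_V_def by blast
  have "indep_set E J"
    unfolding indep_set_def using edges bij_betw_imp_surj_on[OF g] by (auto simp: empty_E_def)
  moreover have "finite J" "card J = n"
    using bij_betw_finite[OF g] bij_betw_same_card[OF g] by auto
  ultimately show thesis using that J by blast
qed

lemma in_induced_copy_emptyI:
  assumes "J \<subseteq> V" "v \<in> J" "finite J" "n \<le> card J" "indep_set E J" "1 \<le> n"
  shows "in_induced_copy V E (empty_V n) empty_E v"
proof -
  have "card {v} \<le> n" using assms(6) by simp
  then obtain U where U: "{v} \<subseteq> U" "U \<subseteq> J" "card U = n"
    using exists_subset_between[of "{v}" n J] assms(2-4) by blast
  then have "finite U" using assms(3) finite_subset by blast
  then obtain g where "bij_betw g {0..<card U} U" using ex_bij_betw_nat_finite by blast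
  then have g: "bij_betw g {0..<n} U" using U(3) by simp
  have "indep_set E U" using indep_set_subset[OF assms(5) U(2)] .
  then have "\<forall>x\<in>{0..<n}. \<forall>y\<in>{0..<n}. empty_E x y \<longleftrightarrow> E (g x) (g y)"
    using bij_betwE[OF g] unfolding indep_set_def empty_E_def by blast
  moreover have "U \<subseteq> V" "v \<in> U" using U assms(1) by auto
  ultimately show ?thesis
    unfolding in_induced_copy_def empty_V_def using g by blast
qed

lemma in_induced_copy_starD:
  assumes "in_induced_copy V E (star_V m) star_E v"
  obtains c L where "c \<in> V" "L \<subseteq> V" "c \<notin> L" "finite L" "card L = m - 1" "indep_set E L"
    "\<forall>l\<in>L. E c l" "v = c \<or> v \<in> L"
proof -
  obtain U g where U: "U \<subseteq> V" "v \<in> U" and g: "bij_betw g {0..<m} U"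
    and edges: "\<forall>x\<in>{0..<m}. \<forall>y\<in>{0..<m}. star_E x y \<longleftrightarrow> E (g x) (g y)"
    using assms unfolding in_induced_copy_def star_V_def by blast
  have m: "0 < m" using U g by (cases m) (auto simp: bij_betw_def)
  have split: "{0..<m} = insert 0 {1..<m}" using m by auto
  have inj: "inj_on g {0..<m}" and img: "g ` {0..<m} = U" using g by (auto simp: bij_betw_def)
  have "g 0 \<in> V" "g ` {1..<m} \<subseteq> V" using U(1) img m by auto
  moreover have "g 0 \<notin> g ` {1..<m}" using inj m by (fastforce simp: inj_on_def)
  moreover have "card (g ` {1..<m}) = m - 1"
    using card_image[OF inj_on_subset[OF inj]] by auto
  moreover have "indep_set E (g ` {1..<m})"
  proof -
    have "\<not> E (g i) (g j)" if "i \<in> {1..<m}" "j \<in> {1..<m}" for i j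
      using edges[rule_format, of i j] that by (simp add: star_E_def)
    then show ?thesis unfolding indep_set_def by blast
  qed
  moreover have "\<forall>l\<in>g ` {1..<m}. E (g 0) l"
  proof
    fix l assume "l \<in> g ` {1..<m}"
    then obtain j where "j \<in> {1..<m}" "l = g j" by blast
    then show "E (g 0) l" using edges[rule_format, of 0 j] m by (simp add: star_E_def)
  qed
  moreover have "v = g 0 \<or> v \<in> g ` {1..<m}" using U(2) img split by auto
  ultimately show thesis using that by blast
qed

lemma bij_betw_centre_first:
  assumes "finite L" "card L = m - 1" "c \<notin> L" "0 < m"
  obtains g where "bij_betw g {0..<m} (insert c L)" "g 0 = c"
proof -
  obtain h where "bij_betw h {1..card L} L" using ex_bij_betw_nat_finite_1[OF assms(1)] by blast
  then have "bij_betw h {1..m - 1} L" using assms(2) by simp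
  then have "bij_betw (h(0 := c)) {1..m - 1} L" by (rule bij_betw_cong[THEN iffD1, rotated]) simp
  then have "bij_betw (h(0 := c)) ({1..m - 1} \<union> {0}) (L \<union> {c})"
    using notIn_Un_bij_betw[of 0 "{1..m - 1}" "h(0 := c)" L] assms(3) by simp
  moreover have "{1..m - 1} \<union> {0} = {0..<m}" using assms(4) by auto
  ultimately show thesis using that[of "h(0 := c)"] by simp
qed

lemma in_induced_copy_star_centreI:
  assumes irrefl: "\<forall>x. \<not> E x x" and sym: "\<forall>x y. E x y \<longrightarrow> E y x"
    and "c \<in> V" "L \<subseteq> V" "c \<notin> L" "finite L" "card L = m - 1" "indep_set E L"
      "\<forall>l\<in>L. E c l" "v \<in> insert c L" "0 < m"
  shows "in_induced_copy V E (star_V m) star_E v"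
proof -
  obtain g where g: "bij_betw g {0..<m} (insert c L)" "g 0 = c"
    using bij_betw_centre_first assms(5-7,11) by metis
  have gL: "g i \<in> L" if "i \<in> {0..<m}" "i \<noteq> 0" for i
  proof -
    have "0 \<in> {0..<m}" using assms(11) by simp
    then have "g i \<noteq> g 0" using g(1) that by (metis bij_betw_def inj_on_def)
    then show ?thesis using bij_betwE[OF g(1)] that(1) g(2) by blast
  qed
  have edges: "star_E i j \<longleftrightarrow> E (g i) (g j)" if "i \<in> {0..<m}" "j \<in> {0..<m}" for i j
  proof (cases "i = j")
    case False
    consider "i = 0" "j \<noteq> 0" | "i \<noteq> 0" "j = 0" | "i \<noteq> 0" "j \<noteq> 0"
      using False by fastforce
    then show ?thesis
    proof cases
      case 1
      then show ?thesis using gL[OF that(2)] assms(9) g(2) by (auto simp: star_E_def)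
    next
      case 2
      then have "E (g i) (g j)" using gL[OF that(1)] assms(9) sym g(2) by metis
      then show ?thesis using 2 by (simp add: star_E_def)
    next
      case 3
      then show ?thesis using gL that assms(8) unfolding star_E_def indep_set_def by blast
    qed
  qed (simp add: star_E_def irrefl)
  show ?thesis unfolding in_induced_copy_def star_V_def
  proof (intro exI conjI)
    show "insert c L \<subseteq> V" using assms(3,4) by blast
    show "v \<in> insert c L" by (rule assms(10))
    show "bij_betw g {0..<m} (insert c L)" by (rule g(1))
    show "\<forall>i\<in>{0..<m}. \<forall>j\<in>{0..<m}. star_E i j \<longleftrightarrow> E (g i) (g j)" using edges by blast
  qed
qed

lemma in_induced_copy_starI:
  assumes irrefl: "\<forall>x. \<not> E x x" and sym: "\<forall>x y. E x y \<longrightarrow> E y x"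
    and "c \<in> V" "K \<subseteq> V" "c \<notin> K" "finite K" "m - 1 \<le> card K" "indep_set E K"
      "\<forall>l\<in>K. E c l" "v = c \<or> v \<in> K" "2 \<le> m"
  shows "in_induced_copy V E (star_V m) star_E v"
proof -
  have "card (K \<inter> {v}) \<le> m - 1"
    using card_mono[of "{v}" "K \<inter> {v}"] assms(11) by (cases "v \<in> K") auto
  then obtain L where L: "K \<inter> {v} \<subseteq> L" "L \<subseteq> K" "card L = m - 1"
    using exists_subset_between[of "K \<inter> {v}" "m - 1" K] assms(6,7) by blast
  show ?thesis
  proof (rule in_induced_copy_star_centreI[OF irrefl sym assms(3) _ _ _ L(3)])
    show "L \<subseteq> V" "c \<notin> L" "finite L" using L(2) assms(4-6) finite_subset by blast+
    show "indep_set E L" using indep_set_subset[OF assms(8) L(2)] .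
    show "\<forall>l\<in>L. E c l" "v \<in> insert c L" "0 < m" using L assms(9-11) by auto
  qed
qed

section \<open>Star forests from dominating sets\<close>

locale graph =
  fixes V :: "'a set" and E :: "'a \<Rightarrow> 'a \<Rightarrow> bool"
  assumes simple_graph: "simple_graph V E"
begin

lemma finite_V: "finite V"
  using simple_graph unfolding simple_graph_def by blast

lemma edge_in_V: "E x y \<Longrightarrow> x \<in> V" "E x y \<Longrightarrow> y \<in> V"
  using simple_graph unfolding simple_graph_def by blast+

lemma edge_sym: "E x y \<Longrightarrow> E y x"
  using simple_graph unfolding simple_graph_def by blast

lemma edge_irrefl [simp]: "\<not> E x x"
  using simple_graph unfolding simple_graph_def by blast

definition dominating :: "'a set \<Rightarrow> bool" where
  "dominating D \<longleftrightarrow> D \<subseteq> V \<and> (\<forall>v\<in>V. v \<in> D \<or> (\<exists>d\<in>D. E v d))"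

definition star_centre :: "nat \<Rightarrow> 'a \<Rightarrow> bool" where
  "star_centre m z \<longleftrightarrow> (\<exists>L\<subseteq>V. finite L \<and> card L = m - 1 \<and> indep_set E L \<and> (\<forall>l\<in>L. E z l))"

definition centre_assignment :: "'a set \<Rightarrow> ('a \<Rightarrow> 'a) \<Rightarrow> bool" where
  "centre_assignment C f \<longleftrightarrow> C \<subseteq> V \<and> (\<forall>v\<in>V - C. f v \<in> C \<and> E v (f v))"

definition lonely_centres :: "'a set \<Rightarrow> ('a \<Rightarrow> 'a) \<Rightarrow> 'a set" where
  "lonely_centres C f = {c\<in>C. \<forall>v\<in>V - C. f v \<noteq> c}"

lemma centre_assignment_drop_centre:
  assumes "centre_assignment C f" "d \<in> lonely_centres C f" "w \<in> C" "E d w"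
  shows "centre_assignment (C - {d}) (f(d := w))"
proof -
  have "w \<noteq> d" using assms(4) by auto
  have "(f(d := w)) v \<in> C - {d} \<and> E v ((f(d := w)) v)" if "v \<in> V - (C - {d})" for v
  proof (cases "v = d")
    case True
    then show ?thesis using \<open>w \<noteq> d\<close> assms(3,4) by simp
  next
    case False
    then have "v \<in> V - C" using that by blast
    then show ?thesis
      using False assms(1,2) unfolding centre_assignment_def lonely_centres_def by auto
  qed
  moreover have "C - {d} \<subseteq> V" using assms(1) unfolding centre_assignment_def by blast
  ultimately show ?thesis unfolding centre_assignment_def by blast
qed

lemma centre_assignment_move_leaf:
  assumes "centre_assignment C f" "d \<in> lonely_centres C f" "w \<in> V - C" "E d w"
    and other_leaf: "v \<in> V - C" "v \<noteq> w" "f v = f w"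
  shows "centre_assignment C (f(w := d)) \<and> lonely_centres C (f(w := d)) \<subset> lonely_centres C f"
proof
  have "E w d" using assms(4) by (rule edge_sym)
  then show "centre_assignment C (f(w := d))"
    using assms(1-3) unfolding centre_assignment_def lonely_centres_def by auto
  have "lonely_centres C (f(w := d)) \<subseteq> lonely_centres C f - {d}"
    using assms(3) other_leaf unfolding lonely_centres_def by (auto split: if_splits)
  then show "lonely_centres C (f(w := d)) \<subset> lonely_centres C f"
    using assms(2) by blast
qed

lemma centre_assignment_merge_stars:
  assumes "centre_assignment C f" "d \<in> lonely_centres C f" "w \<in> V - C" "E d w"
    and only_leaf: "\<forall>v\<in>V - C. f v = f w \<longrightarrow> v = w"
  shows "centre_assignment (insert w (C - {f w, d})) (f(f w := w, d := w))"
    and "card (insert w (C - {f w, d})) < card C"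
proof -
  let ?C' = "insert w (C - {f w, d})" and ?f' = "f(f w := w, d := w)"
  have fw: "f w \<in> C" "E w (f w)" "f w \<noteq> d"
    using assms(1-3) unfolding centre_assignment_def lonely_centres_def by auto
  have "d \<in> C" using assms(2) unfolding lonely_centres_def by blast
  have "?f' v \<in> ?C' \<and> E v (?f' v)" if v: "v \<in> V - ?C'" for v
  proof (cases "v = f w \<or> v = d")
    case True
    then show ?thesis using fw(3) edge_sym[OF fw(2)] assms(4) by auto
  next
    case False
    then have "v \<in> V - C" "v \<noteq> w" using v by auto
    then show ?thesis
      using False assms(1,2) only_leaf unfolding centre_assignment_def lonely_centres_def by auto
  qed
  moreover have "?C' \<subseteq> V" using assms(1,3) unfolding centre_assignment_def by auto
  ultimately show "centre_assignment ?C' ?f'" unfolding centre_assignment_def by blast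
  have "finite C" using assms(1) finite_V finite_subset unfolding centre_assignment_def by blast
  moreover have "card {f w, d} = 2" "{f w, d} \<subseteq> C" using fw(1,3) \<open>d \<in> C\<close> by auto
  ultimately have "card (C - {f w, d}) + 2 = card C"
    using card_mono[of C "{f w, d}"] card_Diff_subset[of "{f w, d}" C] by simp
  moreover have "card ?C' \<le> Suc (card (C - {f w, d}))"
    using \<open>finite C\<close> by (simp add: card_insert_if)
  ultimately show "card ?C' < card C" by linarith
qed

lemma centre_assignment_improve:
  assumes no_isolated: "\<forall>v\<in>V. \<exists>w. E v w"
    and assignment: "centre_assignment C f" and lonely: "d \<in> lonely_centres C f"
  shows "(\<exists>C' f'. centre_assignment C' f' \<and> card C' < card C)
    \<or> (\<exists>f'. centre_assignment C f' \<and> lonely_centres C f' \<subset> lonely_centres C f)"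
proof -
  have "d \<in> C" using lonely unfolding lonely_centres_def by blast
  have "C \<subseteq> V" using assignment unfolding centre_assignment_def by blast
  then have "finite C" using finite_V finite_subset by blast
  obtain w where dw: "E d w" using no_isolated \<open>d \<in> C\<close> \<open>C \<subseteq> V\<close> by blast
  have "w \<in> V" using dw by (rule edge_in_V)
  consider "w \<in> C" | "w \<in> V - C" "\<exists>v\<in>V - C. v \<noteq> w \<and> f v = f w"
    | "w \<in> V - C" "\<forall>v\<in>V - C. f v = f w \<longrightarrow> v = w"
    using \<open>w \<in> V\<close> by blast
  then show ?thesis
  proof cases
    case 1
    have "card (C - {d}) < card C" using \<open>finite C\<close> \<open>d \<in> C\<close> by (rule card_Diff1_less)
    then show ?thesis using centre_assignment_drop_centre[OF assignment lonely 1 dw] by blast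
  next
    case 2
    then obtain v where "v \<in> V - C" "v \<noteq> w" "f v = f w" by blast
    from centre_assignment_move_leaf[OF assignment lonely 2(1) dw this] show ?thesis by blast
  next
    case 3
    from centre_assignment_merge_stars[OF assignment lonely 3(1) dw 3(2)] show ?thesis by blast
  qed
qed

end

locale star_forest = graph +
  fixes C :: "'a set" and f :: "'a \<Rightarrow> 'a"
  assumes centres_subset: "C \<subseteq> V"
    and leaf_assigned: "v \<in> V - C \<Longrightarrow> f v \<in> C"
    and leaf_adjacent: "v \<in> V - C \<Longrightarrow> E v (f v)"
    and centre_has_leaf: "c \<in> C \<Longrightarrow> \<exists>v\<in>V - C. f v = c"

context graph
begin

lemma star_forestI:
  assumes "centre_assignment C f" "lonely_centres C f = {}"
  shows "star_forest V E C f"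
proof unfold_locales
  show "C \<subseteq> V" using assms(1) unfolding centre_assignment_def by blast
  fix v assume "v \<in> V - C"
  then show "f v \<in> C" "E v (f v)" using assms(1) unfolding centre_assignment_def by blast+
next
  fix c assume "c \<in> C"
  then show "\<exists>v\<in>V - C. f v = c" using assms(2) unfolding lonely_centres_def by blast
qed

lemma star_forest_from_assignment:
  assumes no_isolated: "\<forall>v\<in>V. \<exists>w. E v w" and "centre_assignment C f"
  shows "\<exists>C' f'. star_forest V E C' f' \<and> card C' \<le> card C"
  using assms(2)
proof (induction "card C" arbitrary: C f rule: less_induct)
  case less
  note fewer_centres = less.hyps
  show ?case using less.prems
  proof (induction "card (lonely_centres C f)" arbitrary: f rule: less_induct)
    case (less f)
    show ?case
    proof (cases "lonely_centres C f = {}")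
      case True
      then show ?thesis using star_forestI[OF less.prems] by blast
    next
      case False
      then obtain d where "d \<in> lonely_centres C f" by blast
      from centre_assignment_improve[OF no_isolated less.prems this] show ?thesis
      proof (elim disjE exE conjE)
        fix C' f' assume "centre_assignment C' f'" "card C' < card C"
        with fewer_centres[OF this(2,1)] show ?thesis by (meson order.trans less_imp_le)
      next
        fix f' assume f': "centre_assignment C f'" "lonely_centres C f' \<subset> lonely_centres C f"
        have "lonely_centres C f \<subseteq> V"
          using less.prems unfolding centre_assignment_def lonely_centres_def by blast
        then have "finite (lonely_centres C f)" using finite_V by (rule finite_subset)
        then have "card (lonely_centres C f') < card (lonely_centres C f)"
          using f'(2) by (rule psubset_card_mono)
        then show ?thesis using less.hyps f'(1) by blast
      qed
    qed
  qed
qed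

lemma star_forest_from_dominating:
  assumes no_isolated: "\<forall>v\<in>V. \<exists>w. E v w" and "dominating D"
  shows "\<exists>C f. star_forest V E C f \<and> card C \<le> card D"
proof -
  define f where "f v = (SOME d. d \<in> D \<and> E v d)" for v
  have "f v \<in> D \<and> E v (f v)" if "v \<in> V - D" for v
    unfolding f_def by (rule someI_ex) (use assms(2) that in \<open>auto simp: dominating_def\<close>)
  then have "centre_assignment D f"
    using assms(2) unfolding centre_assignment_def dominating_def by blast
  then show ?thesis using star_forest_from_assignment[OF no_isolated] by blast
qed

end

context star_forest
begin

definition owner :: "'a \<Rightarrow> 'a" where
  "owner v = (if v \<in> C then v else f v)"

definition block :: "'a \<Rightarrow> 'a set" where
  "block c = {v\<in>V. owner v = c}"

lemma finite_C: "finite C"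
  using centres_subset finite_V by (rule finite_subset)

lemma finite_block: "finite (block c)"
  unfolding block_def using finite_V by simp

lemma block_subset_V: "block c \<subseteq> V"
  unfolding block_def by blast

lemma in_block_owner: "v \<in> V \<Longrightarrow> owner v \<in> C \<and> v \<in> block (owner v)"
  unfolding block_def owner_def using leaf_assigned by auto

lemma centre_in_block: "c \<in> C \<Longrightarrow> c \<in> block c"
  unfolding block_def owner_def using centres_subset by auto

lemma block_leaf: "c \<in> C \<Longrightarrow> v \<in> block c \<Longrightarrow> v \<noteq> c \<Longrightarrow> v \<in> V - C \<and> E v c"
  unfolding block_def owner_def using leaf_adjacent by (auto split: if_splits)

lemma blocks_disjoint: "c \<noteq> c' \<Longrightarrow> block c \<inter> block c' = {}"
  unfolding block_def by blast

lemma block_has_leaf: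
  assumes "c \<in> C"
  obtains v where "v \<in> block c" "v \<noteq> c"
proof -
  obtain v where "v \<in> V - C" "f v = c" using centre_has_leaf[OF assms] by blast
  then have "v \<in> block c" "v \<noteq> c" using assms unfolding block_def owner_def by auto
  then show thesis by (rule that)
qed

lemma two_le_card_block:
  assumes "c \<in> C"
  shows "2 \<le> card (block c)"
proof -
  obtain v where "v \<in> block c" "v \<noteq> c" using block_has_leaf[OF assms] .
  then have "{c, v} \<subseteq> block c" using centre_in_block[OF assms] by blast
  then have "card {c, v} \<le> card (block c)" by (rule card_mono[OF finite_block])
  then show ?thesis using \<open>v \<noteq> c\<close> by simp
qed

lemma indep_set_Int_block_centre:
  assumes "c \<in> C" "c \<in> J" "indep_set E J"
  shows "block c \<inter> J = {c}"
proof -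
  have "v = c" if "v \<in> block c" "v \<in> J" for v
  proof (rule ccontr)
    assume "v \<noteq> c"
    then have "E v c" using block_leaf[OF assms(1) that(1)] by blast
    then show False using assms(2,3) that(2) unfolding indep_set_def by blast
  qed
  then show ?thesis using centre_in_block[OF assms(1)] assms(2) by blast
qed

lemma indep_set_misses_block:
  assumes "c \<in> C" "indep_set E J"
  shows "\<exists>x\<in>block c. x \<notin> J"
proof (cases "c \<in> J")
  case True
  obtain v where "v \<in> block c" "v \<noteq> c" using block_has_leaf[OF assms(1)] .
  then show ?thesis using indep_set_Int_block_centre[OF assms(1) True assms(2)] by blast
next
  case False
  then show ?thesis using centre_in_block[OF assms(1)] by blast
qed

lemma card_block_Int_indep_set:
  assumes "c \<in> C" "indep_set E J"
  shows "card (block c \<inter> J) < card (block c)"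
proof -
  have "block c \<inter> J \<subset> block c" using indep_set_misses_block[OF assms] by blast
  then show ?thesis using finite_block by (rule psubset_card_mono[rotated])
qed

text \<open>Besides the leaves of the block of c, the complement of J contains one vertex from each
  other block.\<close>
lemma card_block_bound:
  assumes c: "c \<in> C" and J: "J \<subseteq> V" "c \<in> J" "card J = n" "indep_set E J"
  shows "card (block c) + card C \<le> card V - n + 2"
proof -
  define h where "h c' = (SOME x. x \<in> block c' \<and> x \<notin> J)" for c'
  have h: "h c' \<in> block c' \<and> h c' \<notin> J" if "c' \<in> C" for c'
    unfolding h_def by (rule someI_ex) (use indep_set_misses_block[OF that J(4)] in blast)
  have inj: "inj_on h (C - {c})"
  proof (rule inj_onI)
    fix x y assume "x \<in> C - {c}" "y \<in> C - {c}" "h x = h y"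
    then have "h x \<in> block x \<inter> block y" using h[of x] h[of y] by simp
    then show "x = y" using blocks_disjoint by blast
  qed
  have leaves: "block c - {c} \<subseteq> V - J"
    using indep_set_Int_block_centre[OF c J(2,4)] block_subset_V by blast
  have others: "h ` (C - {c}) \<subseteq> V - J"
    using h block_subset_V by blast
  have disjoint: "(block c - {c}) \<inter> h ` (C - {c}) = {}"
  proof -
    have "h c' \<notin> block c" if "c' \<in> C - {c}" for c'
      using h[of c'] blocks_disjoint[of c' c] that by blast
    then show ?thesis by blast
  qed
  have "card (block c - {c}) = card (block c) - 1"
    using centre_in_block[OF c] finite_block by simp
  moreover have "card (h ` (C - {c})) = card C - 1"
    using card_image[OF inj] c finite_C by simp
  ultimately have "card (block c) - 1 + (card C - 1) = card ((block c - {c}) \<union> h ` (C - {c}))"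
    using card_Un_disjoint[OF _ _ disjoint] finite_block finite_C by simp
  also have "\<dots> \<le> card (V - J)"
    using leaves others finite_V by (intro card_mono) auto
  also have "\<dots> = card V - n"
    using J(1,3) finite_subset[OF J(1) finite_V] by (simp add: card_Diff_subset)
  finally have "card (block c) - 1 + (card C - 1) \<le> card V - n" .
  moreover have "0 < card C" using c finite_C card_gt_0_iff by auto
  ultimately show ?thesis using two_le_card_block[OF c] by linarith
qed

lemma card_block_Int_indep_set_le:
  assumes "c \<in> C" "indep_set E J"
    and J': "J' \<subseteq> V" "c \<in> J'" "card J' = n" "indep_set E J'"
  shows "card (block c \<inter> J) \<le> card V - n + 1 - card C"
  using card_block_bound[OF assms(1) J'] card_block_Int_indep_set[OF assms(1,2)] by linarith

lemma card_C_pos: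
  assumes "V \<noteq> {}"
  shows "0 < card C"
proof -
  obtain v where "v \<in> V" using assms by blast
  then have "owner v \<in> C" using in_block_owner by blast
  then show ?thesis using finite_C card_gt_0_iff by blast
qed

text \<open>An independent n-set through a centre c meets c's block only in c, and each other block
  in at most card V - n + 1 - card C vertices.\<close>
lemma star_forest_count:
  assumes "V \<noteq> {}"
    and indep: "\<forall>v\<in>V. \<exists>J\<subseteq>V. v \<in> J \<and> finite J \<and> card J = n \<and> indep_set E J"
  shows "card C + n \<le> card V" "n - 1 \<le> (card C - 1) * (card V - n + 1 - card C)"
proof -
  have "C \<noteq> {}" using card_C_pos[OF assms(1)] by auto
  then obtain c where c: "c \<in> C" by blast
  then obtain J where J: "J \<subseteq> V" "c \<in> J" "finite J" "card J = n" "indep_set E J"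
    using indep centres_subset by blast
  have "n \<le> card V" using card_mono[OF finite_V J(1)] J(4) by simp
  then show "card C + n \<le> card V"
    using card_block_bound[OF c J(1,2,4,5)] two_le_card_block[OF c] by linarith
  have "J - {c} \<subseteq> (\<Union>c'\<in>C - {c}. block c' \<inter> J)"
    using in_block_owner indep_set_Int_block_centre[OF c J(2,5)] J(1) by fastforce
  moreover have "finite (\<Union>c'\<in>C - {c}. block c' \<inter> J)"
    using finite_C finite_block by blast
  ultimately have "card (J - {c}) \<le> card (\<Union>c'\<in>C - {c}. block c' \<inter> J)"
    by (rule card_mono[rotated])
  then have "n - 1 \<le> card (\<Union>c'\<in>C - {c}. block c' \<inter> J)"
    using J(2-4) by simp
  also have "\<dots> \<le> (\<Sum>c'\<in>C - {c}. card (block c' \<inter> J))"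
    by (rule card_UN_le) (use finite_C in blast)
  also have "\<dots> \<le> of_nat (card (C - {c})) * (card V - n + 1 - card C)"
  proof (rule sum_bounded_above)
    fix c' assume c': "c' \<in> C - {c}"
    then obtain J' where "J' \<subseteq> V" "c' \<in> J'" "card J' = n" "indep_set E J'"
      using indep centres_subset by blast
    then show "card (block c' \<inter> J) \<le> card V - n + 1 - card C"
      using card_block_Int_indep_set_le[OF _ J(5)] c' by blast
  qed
  also have "\<dots> = (card C - 1) * (card V - n + 1 - card C)"
    using c finite_C by simp
  finally show "n - 1 \<le> (card C - 1) * (card V - n + 1 - card C)" .
qed

end

section \<open>The lower bound\<close>

locale star_empty_full = graph +
  fixes m n :: nat
  assumes two_le_m: "2 \<le> m"
    and star_copy: "v \<in> V \<Longrightarrow> in_induced_copy V E (star_V m) star_E v"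
    and empty_copy: "v \<in> V \<Longrightarrow> in_induced_copy V E (empty_V n) empty_E v"

lemma star_empty_fullI:
  "is_full V E (star_V m) star_E (empty_V n) empty_E \<Longrightarrow> 2 \<le> m \<Longrightarrow> star_empty_full V E m n"
  unfolding is_full_def star_empty_full_def star_empty_full_axioms_def graph_def by blast

context star_empty_full
begin

lemma indep_set_through:
  assumes "v \<in> V"
  obtains J where "J \<subseteq> V" "v \<in> J" "finite J" "card J = n" "indep_set E J"
  using in_induced_copy_emptyD[OF empty_copy[OF assms]] .

lemma star_centre_or_adjacent:
  assumes "v \<in> V"
  shows "star_centre m v \<or> (\<exists>z. E v z \<and> star_centre m z)"
proof -
  obtain c L where "c \<in> V" "L \<subseteq> V" "finite L" "card L = m - 1" "indep_set E L"
      "\<forall>l\<in>L. E c l" "v = c \<or> v \<in> L"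
    using in_induced_copy_starD[OF star_copy[OF assms]] by metis
  moreover have "star_centre m c" using calculation unfolding star_centre_def by blast
  ultimately show ?thesis using edge_sym by blast
qed

lemma no_isolated: "\<forall>v\<in>V. \<exists>w. E v w"
proof
  fix v assume "v \<in> V"
  obtain c L where "L \<subseteq> V" "card L = m - 1" "\<forall>l\<in>L. E c l" "v = c \<or> v \<in> L"
    using in_induced_copy_starD[OF star_copy[OF \<open>v \<in> V\<close>]] by metis
  moreover have "L \<noteq> {}" using calculation(2) two_le_m by auto
  ultimately show "\<exists>w. E v w" using edge_sym by blast
qed

end

locale centred_indep_set = star_empty_full +
  fixes c :: 'a and L J :: "'a set"
  assumes leaves: "L \<subseteq> V" "finite L" "card L = m - 1" "indep_set E L" "\<forall>l\<in>L. E c l"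
    and indep: "J \<subseteq> V" "c \<in> J" "finite J" "card J = n" "indep_set E J"
begin

definition outside :: "'a set" where
  "outside = V - J - L"

definition undominated :: "'a set" where
  "undominated = {u\<in>J - {c}. \<forall>y\<in>outside. \<not> E u y}"

lemma leaves_disjoint_indep: "L \<inter> J = {}"
  using leaves(5) indep(2,5) unfolding indep_set_def by blast

lemma finite_outside: "finite outside"
  unfolding outside_def using finite_V by blast

lemma card_V_split: "card V = n + (m - 1) + card outside"
proof -
  have "V = J \<union> L \<union> outside" "J \<inter> L = {}" "(J \<union> L) \<inter> outside = {}"
    using indep(1) leaves(1) leaves_disjoint_indep unfolding outside_def by blast+
  then show ?thesis
    using card_Un_disjoint indep(3,4) leaves(2,3) finite_outside
    by (metis finite_UnI)
qed

lemma undominated_neighbour: "u \<in> undominated \<Longrightarrow> E u w \<Longrightarrow> w \<in> L"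
  using edge_in_V(2)[of u w] indep(5) unfolding undominated_def outside_def indep_set_def by blast

lemma dominating_with_cover:
  assumes "T \<subseteq> V" "\<forall>u\<in>undominated. \<exists>t\<in>T. E u t"
  shows "dominating (insert c (outside \<union> T))"
proof -
  have "v \<in> insert c (outside \<union> T) \<or> (\<exists>d\<in>insert c (outside \<union> T). E v d)" if "v \<in> V" for v
  proof (cases "v \<in> L")
    case True
    then show ?thesis using leaves(5) edge_sym by blast
  next
    case False
    then show ?thesis using that assms(2) unfolding outside_def undominated_def by blast
  qed
  moreover have "insert c (outside \<union> T) \<subseteq> V"
    using assms(1) indep(1,2) unfolding outside_def by blast
  ultimately show ?thesis unfolding dominating_def by blast
qed

lemma cover_without_central_leaf:
  assumes "\<forall>l\<in>L. \<not> star_centre m l"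
  obtains T where "T \<subseteq> V" "card T \<le> 1" "\<forall>u\<in>undominated. \<exists>t\<in>T. E u t"
proof -
  have "L \<noteq> {}" using leaves(3) two_le_m by auto
  then obtain l where "l \<in> L" by blast
  have "E u l" if u: "u \<in> undominated" for u
  proof -
    have "u \<in> V" using u indep(1) unfolding undominated_def by blast
    moreover have "\<not> star_centre m z" if "E u z" for z
      using undominated_neighbour[OF u that] assms by blast
    ultimately have "star_centre m u" using star_centre_or_adjacent by blast
    then obtain Lu where Lu: "Lu \<subseteq> V" "finite Lu" "card Lu = m - 1" "\<forall>x\<in>Lu. E u x"
      unfolding star_centre_def by blast
    then have "Lu \<subseteq> L" using undominated_neighbour[OF u] by blast
    then have "Lu = L" using card_subset_eq[OF leaves(2)] Lu(3) leaves(3) by simp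
    then show "E u l" using Lu(4) \<open>l \<in> L\<close> by blast
  qed
  then show thesis using that[of "{l}"] \<open>l \<in> L\<close> leaves(1) by auto
qed

end

text \<open>If some leaf l is itself a star
  centre, with an independent n-set J' through it, then l, the leaves outside J' and one
  neighbour of each vertex of R dominate undominated, and counting neighbours of l shows that
  these are at most card outside + 1 vertices.\<close>
locale central_leaf = centred_indep_set +
  fixes l :: 'a and J' :: "'a set"
  assumes central_leaf: "l \<in> L" "star_centre m l"
    and indep': "J' \<subseteq> V" "l \<in> J'" "finite J'" "card J' = n" "indep_set E J'"
begin

definition A :: "'a set" where
  "A = J' - J"

definition R :: "'a set" where
  "R = {u\<in>undominated. \<not> E u l \<and> (\<forall>y\<in>L - A. \<not> E u y)}"

lemma finite_A: "finite A"
  unfolding A_def using indep'(3) by blast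

lemma finite_R: "finite R"
  unfolding R_def undominated_def using indep(3) by auto

lemma l_in_A: "l \<in> A"
  unfolding A_def using central_leaf(1) indep'(2) leaves_disjoint_indep by blast

lemma card_neighbours_l: "m - 1 \<le> card {u\<in>J. E l u} + card {y\<in>outside. E l y}"
proof -
  obtain Ll where Ll: "Ll \<subseteq> V" "card Ll = m - 1" "\<forall>x\<in>Ll. E l x"
    using central_leaf(2) unfolding star_centre_def by blast
  have "x \<notin> L" if "x \<in> Ll" for x
    using that Ll(3) central_leaf(1) leaves(4) unfolding indep_set_def by blast
  then have "Ll \<subseteq> {u\<in>J. E l u} \<union> {y\<in>outside. E l y}"
    using Ll unfolding outside_def by blast
  then have "card Ll \<le> card ({u\<in>J. E l u} \<union> {y\<in>outside. E l y})"
    using indep(3) finite_outside by (intro card_mono) auto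
  also have "\<dots> \<le> card {u\<in>J. E l u} + card {y\<in>outside. E l y}"
    by (rule card_Un_le)
  finally show ?thesis using Ll(2) by simp
qed

lemma card_A: "card A = card (J - J')"
proof -
  have "card J' = card (J' \<inter> J) + card A"
    unfolding A_def using indep'(3) by (metis card_Int_Diff)
  moreover have "card J = card (J \<inter> J') + card (J - J')"
    using indep(3) by (metis card_Int_Diff)
  ultimately show ?thesis using indep(4) indep'(4) by (simp add: Int_commute)
qed

lemma card_R_neighbours_l: "card R + card {u\<in>J. E l u} \<le> card A"
proof -
  have "u \<in> J - J'" if "u \<in> J" "a \<in> A" "E u a" for u a
    using that indep'(5) unfolding A_def indep_set_def by blast
  moreover have "\<exists>a\<in>A. E u a" if "u \<in> R" for u
  proof -
    have "u \<in> V" using that indep(1) unfolding R_def undominated_def by blast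
    then obtain w where "E u w" using no_isolated by blast
    moreover have "w \<in> L" using undominated_neighbour \<open>E u w\<close> that unfolding R_def by blast
    ultimately show ?thesis using that unfolding R_def by blast
  qed
  moreover have "E u l" if "u \<in> {u\<in>J. E l u}" for u using that edge_sym by blast
  ultimately have sub: "R \<union> {u\<in>J. E l u} \<subseteq> J - J'"
    using l_in_A unfolding R_def undominated_def by blast
  have "R \<inter> {u\<in>J. E l u} = {}"
    unfolding R_def using edge_sym by blast
  then have "card R + card {u\<in>J. E l u} = card (R \<union> {u\<in>J. E l u})"
    using finite_R indep(3) by (intro card_Un_disjoint[symmetric]) auto
  also have "\<dots> \<le> card (J - J')"
    using sub indep(3) by (intro card_mono) auto
  finally show ?thesis using card_A by simp
qed

lemma card_A_outside: "card (A \<inter> outside) + card {y\<in>outside. E l y} \<le> card outside"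
proof -
  have "(A \<inter> outside) \<inter> {y\<in>outside. E l y} = {}"
    using indep'(2,5) unfolding A_def indep_set_def by blast
  then have "card (A \<inter> outside) + card {y\<in>outside. E l y} = card ((A \<inter> outside) \<union> {y\<in>outside. E l y})"
    using finite_outside by (intro card_Un_disjoint[symmetric]) auto
  also have "\<dots> \<le> card outside"
    using finite_outside by (intro card_mono) auto
  finally show ?thesis .
qed

lemma card_A_split: "card A = card (A \<inter> L) + card (A \<inter> outside)"
proof -
  have "A = (A \<inter> L) \<union> (A \<inter> outside)" "(A \<inter> L) \<inter> (A \<inter> outside) = {}"
    using indep'(1) unfolding A_def outside_def by blast+
  then show ?thesis using finite_A card_Un_disjoint by (metis finite_Int)
qed

lemma card_L_minus_A_R: "card (L - A) + card R \<le> card outside"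
proof -
  have "card (L - A) + card (A \<inter> L) = m - 1"
    using leaves(2,3) by (metis Int_commute card_Int_Diff add.commute)
  then show ?thesis
    using card_neighbours_l card_R_neighbours_l card_A_outside card_A_split by linarith
qed

lemma cover_with_central_leaf:
  obtains T where "T \<subseteq> V" "card T \<le> card outside + 1" "\<forall>u\<in>undominated. \<exists>t\<in>T. E u t"
proof -
  define nbr where "nbr u = (SOME w. E u w)" for u
  have nbr: "E u (nbr u)" if "u \<in> R" for u
  proof -
    have "u \<in> V" using that indep(1) unfolding R_def undominated_def by blast
    then show ?thesis unfolding nbr_def using no_isolated by (metis someI_ex)
  qed
  define T where "T = insert l ((L - A) \<union> nbr ` R)"
  have "finite ((L - A) \<union> nbr ` R)" using leaves(2) finite_R by blast
  then have "card T \<le> Suc (card ((L - A) \<union> nbr ` R))"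
    unfolding T_def by (simp add: card_insert_if)
  also have "\<dots> \<le> Suc (card (L - A) + card (nbr ` R))"
    using card_Un_le by simp
  also have "\<dots> \<le> Suc (card (L - A) + card R)"
    using card_image_le[OF finite_R] by simp
  finally have "card T \<le> card outside + 1" using card_L_minus_A_R by linarith
  moreover have "T \<subseteq> V"
    unfolding T_def using nbr edge_in_V(2) central_leaf(1) leaves(1) by blast
  moreover have "\<forall>u\<in>undominated. \<exists>t\<in>T. E u t"
    unfolding T_def R_def using nbr unfolding R_def by blast
  ultimately show thesis using that by blast
qed

end

context centred_indep_set
begin

lemma small_dominating_set: "\<exists>D. dominating D \<and> card D + 2 * m \<le> 2 * (card V - n) + 4"
proof -
  obtain T where T: "T \<subseteq> V" "card T \<le> card outside + 1" "\<forall>u\<in>undominated. \<exists>t\<in>T. E u t"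
  proof (cases "\<exists>l\<in>L. star_centre m l")
    case True
    then obtain l where l: "l \<in> L" "star_centre m l" by blast
    have "l \<in> V" using l(1) leaves(1) by blast
    then obtain J' where "J' \<subseteq> V" "l \<in> J'" "finite J'" "card J' = n" "indep_set E J'"
      by (rule indep_set_through)
    with l interpret central_leaf V E m n c L J l J'
      by unfold_locales
    obtain T where "T \<subseteq> V" "card T \<le> card outside + 1" "\<forall>u\<in>undominated. \<exists>t\<in>T. E u t"
      by (rule cover_with_central_leaf)
    then show thesis by (rule that)
  next
    case False
    then have "\<forall>l\<in>L. \<not> star_centre m l" by blast
    then obtain T where T: "T \<subseteq> V" "card T \<le> 1" "\<forall>u\<in>undominated. \<exists>t\<in>T. E u t"
      by (rule cover_without_central_leaf)
    have "card T \<le> card outside + 1" using T(2) by simp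
    with T(1) show thesis using T(3) by (rule that)
  qed
  define D where "D = insert c (outside \<union> T)"
  have "dominating D" unfolding D_def using dominating_with_cover[OF T(1,3)] .
  moreover have "card D \<le> Suc (card outside + card T)"
  proof -
    have "finite (outside \<union> T)" using finite_outside finite_subset[OF T(1) finite_V] by blast
    then have "card D \<le> Suc (card (outside \<union> T))" unfolding D_def by (simp add: card_insert_if)
    then show ?thesis using card_Un_le[of outside T] by simp
  qed
  moreover have "card V - n = m - 1 + card outside" using card_V_split by simp
  ultimately show ?thesis using T(2) two_le_m by (intro exI[of _ D]) auto
qed

end

context star_empty_full
begin

lemma small_dominating_set:
  assumes "V \<noteq> {}"
  shows "\<exists>D. dominating D \<and> card D + 2 * m \<le> 2 * (card V - n) + 4"
proof -
  obtain v where "v \<in> V" using assms by blast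
  obtain c L where c: "c \<in> V" and L: "L \<subseteq> V" "c \<notin> L" "finite L" "card L = m - 1"
      "indep_set E L" "\<forall>l\<in>L. E c l" "v = c \<or> v \<in> L"
    by (rule in_induced_copy_starD[OF star_copy[OF \<open>v \<in> V\<close>]])
  obtain J where "J \<subseteq> V" "c \<in> J" "finite J" "card J = n" "indep_set E J"
    using c by (rule indep_set_through)
  with L(1,3-6) interpret centred_indep_set V E m n c L J
    by unfold_locales
  show ?thesis by (rule small_dominating_set)
qed

end

lemma nat_ceiling_divide_le_iff:
  fixes a j k :: nat
  assumes "0 < k"
  shows "nat \<lceil>real a / real k\<rceil> \<le> j \<longleftrightarrow> a \<le> j * k"
proof -
  have "nat \<lceil>real a / real k\<rceil> \<le> j \<longleftrightarrow> real a / real k \<le> real j"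
    by (simp add: nat_le_iff ceiling_le_iff)
  also have "\<dots> \<longleftrightarrow> real a \<le> real (j * k)"
    using assms by (simp add: pos_divide_le_eq)
  finally show ?thesis by (simp only: of_nat_le_iff)
qed

definition star_empty_bound :: "nat \<Rightarrow> nat \<Rightarrow> nat \<Rightarrow> nat" where
  "star_empty_bound n m k = max (k + nat \<lceil>real (n - 1) / real k\<rceil>) (2 * m - 3 - k)"

lemma (in star_empty_full) card_V_ge_star_empty_bound:
  assumes "V \<noteq> {}"
  shows "\<exists>k\<ge>1. n + star_empty_bound n m k \<le> card V"
proof -
  obtain D where D: "dominating D" "card D + 2 * m \<le> 2 * (card V - n) + 4"
    using small_dominating_set[OF assms] by blast
  obtain C f where forest: "star_forest V E C f" and CD: "card C \<le> card D"
    using star_forest_from_dominating[OF no_isolated D(1)] by blast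
  interpret star_forest V E C f by (rule forest)
  have indep: "\<forall>v\<in>V. \<exists>J\<subseteq>V. v \<in> J \<and> finite J \<and> card J = n \<and> indep_set E J"
  proof
    fix v assume "v \<in> V"
    from indep_set_through[OF this] show "\<exists>J\<subseteq>V. v \<in> J \<and> finite J \<and> card J = n \<and> indep_set E J"
      by blast
  qed
  have C: "0 < card C" "card C + n \<le> card V" "n - 1 \<le> (card C - 1) * (card V - n + 1 - card C)"
    using card_C_pos[OF assms] star_forest_count[OF assms indep] by auto
  define t where "t = card V - n"
  define k where "k = t + 1 - card C"
  have t: "n + t = card V" and k: "k + card C = t + 1" "0 < k"
    using C(1,2) unfolding t_def k_def by auto
  have "nat \<lceil>real (n - 1) / real k\<rceil> \<le> card C - 1"
    using nat_ceiling_divide_le_iff[OF k(2), of "n - 1" "card C - 1"] C(3)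
    unfolding k_def t_def by (simp add: mult.commute)
  then have "k + nat \<lceil>real (n - 1) / real k\<rceil> \<le> t" using k C(1) by linarith
  moreover have "2 * m - 3 - k \<le> t" using D(2) CD k unfolding t_def by linarith
  ultimately have "star_empty_bound n m k \<le> t" unfolding star_empty_bound_def by simp
  then show ?thesis using t k(2) by (intro exI[of _ k]) auto
qed

section \<open>The window construction\<close>

definition window :: "nat \<Rightarrow> nat \<Rightarrow> nat \<Rightarrow> nat set" where
  "window k x i = {min (i * k) (x - k)..<min (i * k) (x - k) + k}"

lemma card_window: "card (window k x i) = k"
  unfolding window_def by simp

lemma window_subset: "k \<le> x \<Longrightarrow> window k x i \<subseteq> {..<x}"
  unfolding window_def by auto

lemma windows_cover:
  assumes "0 < k" "x \<le> q * k" "j < x"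
  shows "\<exists>i<q. j \<in> window k x i"
proof (cases "j div k * k + k \<le> x")
  case True
  have "j div k * k \<le> j" "j < j div k * k + k"
    using div_mult_mod_eq[of j k] mod_less_divisor[OF assms(1), of j] by linarith+
  moreover have "(j div k + 1) * k \<le> q * k" using True assms(2) by simp
  then have "j div k < q" using assms(1) by (metis mult_le_cancel2 Suc_eq_plus1 Suc_le_eq)
  ultimately show ?thesis
    using True unfolding window_def by (intro exI[of _ "j div k"]) auto
next
  case False
  have "j div k * k \<le> j" using div_mult_mod_eq[of j k] by linarith
  then have "x - k \<le> j" using False by linarith
  moreover have "0 < q" using assms by (cases q) auto
  moreover have "x - k \<le> (q - 1) * k" using assms(2) by (simp add: diff_mult_distrib)
  ultimately show ?thesis
    using assms(3) unfolding window_def by (intro exI[of _ "q - 1"]) auto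
qed

datatype window_vertex = Hub bool nat | Leaf bool nat

locale window_graph =
  fixes p x :: "bool \<Rightarrow> nat" and k :: nat
  assumes k_pos: "0 < k" and k_le_leaves: "k \<le> x s" and leaves_le: "x s \<le> p s * k"
begin

definition hubs :: "bool \<Rightarrow> window_vertex set" where
  "hubs s = Hub s ` {..<p s}"

definition leaves :: "bool \<Rightarrow> window_vertex set" where
  "leaves s = Leaf s ` {..<x s}"

definition hub_window :: "bool \<Rightarrow> nat \<Rightarrow> window_vertex set" where
  "hub_window s i = Leaf s ` window k (x s) i"

definition V :: "window_vertex set" where
  "V = hubs True \<union> hubs False \<union> leaves True \<union> leaves False"

fun adjacent :: "window_vertex \<Rightarrow> window_vertex \<Rightarrow> bool" where
  "adjacent (Hub s _) (Hub s' _) \<longleftrightarrow> s \<noteq> s'"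
| "adjacent (Hub s i) (Leaf s' j) \<longleftrightarrow> s' = s \<and> j \<in> window k (x s) i"
| "adjacent (Leaf s j) (Hub s' i) \<longleftrightarrow> s' = s \<and> j \<in> window k (x s) i"
| "adjacent (Leaf _ _) (Leaf _ _) \<longleftrightarrow> False"

definition E :: "window_vertex \<Rightarrow> window_vertex \<Rightarrow> bool" where
  "E u v \<longleftrightarrow> u \<in> V \<and> v \<in> V \<and> adjacent u v"

lemma Hub_in_V [simp]: "Hub s i \<in> V \<longleftrightarrow> i < p s"
  unfolding V_def hubs_def leaves_def by (cases s) auto

lemma Leaf_in_V [simp]: "Leaf s j \<in> V \<longleftrightarrow> j < x s"
  unfolding V_def hubs_def leaves_def by (cases s) auto

lemma adjacent_sym: "adjacent u v \<longleftrightarrow> adjacent v u"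
  by (cases u; cases v) auto

lemma not_adjacent_self: "\<not> adjacent u u"
  by (cases u) auto

lemma hub_window_subset_leaves: "hub_window s i \<subseteq> leaves s"
  unfolding hub_window_def leaves_def using window_subset[OF k_le_leaves] by blast

lemma card_hubs: "card (hubs s) = p s"
  unfolding hubs_def by (simp add: card_image inj_on_def)

lemma card_leaves: "card (leaves s) = x s"
  unfolding leaves_def by (simp add: card_image inj_on_def)

lemma card_hub_window: "card (hub_window s i) = k"
  unfolding hub_window_def by (simp add: card_image inj_on_def card_window)

lemma card_all_leaves: "card (leaves True \<union> leaves False) = x True + x False"
proof -
  have "card (leaves True \<union> leaves False) = card (leaves True) + card (leaves False)"
    by (intro card_Un_disjoint) (auto simp: leaves_def)
  then show ?thesis by (simp add: card_leaves)
qed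

lemma all_leaves_subset_V: "leaves True \<union> leaves False \<subseteq> V"
  unfolding V_def by blast

lemma finite_hub_window: "finite (hub_window s i)"
  unfolding hub_window_def window_def by simp

lemma simple_graph: "simple_graph V E"
  unfolding simple_graph_def E_def V_def hubs_def leaves_def
  using adjacent_sym not_adjacent_self by auto

lemma card_V: "card V = p True + p False + x True + x False"
proof -
  have "card V = card (hubs True) + card (hubs False) + card (leaves True) + card (leaves False)"
    unfolding V_def hubs_def leaves_def by (subst card_Un_disjoint; auto)+
  then show ?thesis by (simp add: card_hubs card_leaves)
qed

lemma E_irrefl: "\<forall>u. \<not> E u u"
  unfolding E_def using not_adjacent_self by blast

lemma E_sym: "\<forall>u v. E u v \<longrightarrow> E v u"
  unfolding E_def using adjacent_sym by blast

lemma indep_set_leaves: "indep_set E (leaves True \<union> leaves False)"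
  unfolding indep_set_def E_def leaves_def by auto

lemma star_at_hub:
  assumes "i < p s" "m - 1 \<le> p (\<not> s) + k" "2 \<le> m"
    and "v \<in> insert (Hub s i) (hubs (\<not> s) \<union> hub_window s i)"
  shows "in_induced_copy V E (star_V m) star_E v"
proof (rule in_induced_copy_starI[OF E_irrefl E_sym])
  have "hub_window s i \<subseteq> V" using hub_window_subset_leaves unfolding V_def by (cases s) auto
  then show "hubs (\<not> s) \<union> hub_window s i \<subseteq> V" unfolding V_def by (cases s) auto
  have "hubs (\<not> s) \<inter> hub_window s i = {}" unfolding hubs_def hub_window_def by auto
  then have "card (hubs (\<not> s) \<union> hub_window s i) = card (hubs (\<not> s)) + card (hub_window s i)"
    by (intro card_Un_disjoint) (auto simp: hubs_def hub_window_def window_def)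
  then have "card (hubs (\<not> s) \<union> hub_window s i) = p (\<not> s) + k"
    by (simp add: card_hubs card_hub_window)
  then show "m - 1 \<le> card (hubs (\<not> s) \<union> hub_window s i)" using assms(2) by simp
  show "indep_set E (hubs (\<not> s) \<union> hub_window s i)"
    unfolding indep_set_def E_def hubs_def hub_window_def by auto
  show "\<forall>l\<in>hubs (\<not> s) \<union> hub_window s i. E (Hub s i) l"
    using \<open>hub_window s i \<subseteq> V\<close> assms(1) unfolding E_def hubs_def hub_window_def by auto
qed (use assms finite_hub_window in \<open>auto simp: hubs_def hub_window_def\<close>)

lemma star_at_leaf:
  assumes "j < x s" "m - 1 \<le> p (\<not> s) + k" "2 \<le> m"
  shows "in_induced_copy V E (star_V m) star_E (Leaf s j)"
proof -
  obtain i where "i < p s" "j \<in> window k (x s) i"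
    using windows_cover[OF k_pos leaves_le assms(1)] by blast
  then show ?thesis
    using star_at_hub[of i s m "Leaf s j"] assms(2,3) unfolding hub_window_def by blast
qed

lemma indep_at_hub:
  assumes "i < p s" "1 \<le> n" "n + k \<le> x True + x False + 1"
  shows "in_induced_copy V E (empty_V n) empty_E (Hub s i)"
proof (rule in_induced_copy_emptyI)
  let ?J = "insert (Hub s i) (leaves True \<union> leaves False - hub_window s i)"
  show "?J \<subseteq> V" using assms(1) all_leaves_subset_V by auto
  have "hub_window s i \<subseteq> leaves True \<union> leaves False"
    using hub_window_subset_leaves by (cases s) auto
  then have "card (leaves True \<union> leaves False - hub_window s i) = x True + x False - k"
    using card_Diff_subset[OF finite_hub_window] card_all_leaves card_hub_window by simp
  moreover have "Hub s i \<notin> leaves True \<union> leaves False - hub_window s i"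
    unfolding leaves_def by blast
  moreover have "finite (leaves True \<union> leaves False - hub_window s i)"
    unfolding leaves_def by blast
  ultimately have "card ?J = x True + x False - k + 1" by simp
  then show "n \<le> card ?J" using assms(3) k_le_leaves[of True] by linarith
  show "indep_set E ?J"
    unfolding indep_set_def E_def leaves_def hub_window_def by auto
qed (use assms(2) in \<open>auto simp: leaves_def\<close>)

lemma indep_at_leaf:
  assumes "j < x s" "1 \<le> n" "n \<le> x True + x False"
  shows "in_induced_copy V E (empty_V n) empty_E (Leaf s j)"
proof (rule in_induced_copy_emptyI[OF _ _ _ _ indep_set_leaves assms(2)])
  show "leaves True \<union> leaves False \<subseteq> V" by (rule all_leaves_subset_V)
  show "Leaf s j \<in> leaves True \<union> leaves False" using assms(1) unfolding leaves_def by (cases s) auto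
  show "n \<le> card (leaves True \<union> leaves False)"
    using assms(3) card_all_leaves by simp
qed (simp add: leaves_def)

theorem is_full:
  assumes "2 \<le> m" "\<And>s. m - 1 \<le> p s + k" "1 \<le> n" "n + k \<le> x True + x False + 1"
  shows "is_full V E (star_V m) star_E (empty_V n) empty_E"
  unfolding is_full_def
proof (rule conjI[OF simple_graph], intro ballI)
  fix v assume "v \<in> V"
  show "in_induced_copy V E (star_V m) star_E v \<and> in_induced_copy V E (empty_V n) empty_E v"
  proof (cases v)
    case (Hub s i)
    then have "i < p s" using \<open>v \<in> V\<close> by simp
    then show ?thesis
      using star_at_hub[OF \<open>i < p s\<close> assms(2) assms(1), of v] indep_at_hub[OF _ assms(3,4)] Hub
      by simp
  next
    case (Leaf s j)
    then have "j < x s" using \<open>v \<in> V\<close> by simp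
    then show ?thesis
      using star_at_leaf[OF \<open>j < x s\<close> assms(2) assms(1)] indep_at_leaf[OF _ assms(3)] Leaf
        assms(4) k_pos by simp
  qed
qed

end

section \<open>The order of full graphs\<close>

lemma in_induced_copy_transfer:
  assumes h: "bij_betw h V' V" and edges: "\<forall>x\<in>V'. \<forall>y\<in>V'. E' x y \<longleftrightarrow> E (h x) (h y)"
    and v: "v \<in> V'" and copy: "in_induced_copy V E W F (h v)"
  shows "in_induced_copy V' E' W F v"
proof -
  obtain U g where U: "U \<subseteq> V" "h v \<in> U" and g: "bij_betw g W U"
    and Fg: "\<forall>x\<in>W. \<forall>y\<in>W. F x y \<longleftrightarrow> E (g x) (g y)"
    using copy unfolding in_induced_copy_def by blast
  define h' where "h' = inv_into V' h"
  have h': "bij_betw h' V V'" unfolding h'_def using h by (rule bij_betw_inv_into)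
  have h_h': "h (h' u) = u" if "u \<in> V" for u
    unfolding h'_def using that h by (simp add: bij_betw_def f_inv_into_f)
  have "bij_betw (h' \<circ> g) W (h' ` U)"
    using g bij_betw_subset[OF h' U(1) refl] by (rule bij_betw_trans)
  moreover have "h' ` U \<subseteq> V'" using h' U(1) by (auto simp: bij_betw_def)
  moreover have "v \<in> h' ` U"
    using U(2) v h unfolding h'_def by (metis bij_betw_def image_eqI inv_into_f_f)
  moreover have "\<forall>x\<in>W. \<forall>y\<in>W. F x y \<longleftrightarrow> E' ((h' \<circ> g) x) ((h' \<circ> g) y)"
  proof (intro ballI)
    fix x y assume "x \<in> W" "y \<in> W"
    then have "g x \<in> V" "g y \<in> V" using g U(1) by (auto simp: bij_betw_def)
    then show "F x y \<longleftrightarrow> E' ((h' \<circ> g) x) ((h' \<circ> g) y)"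
      using Fg \<open>x \<in> W\<close> \<open>y \<in> W\<close> edges h_h' bij_betwE[OF h'] by simp
  qed
  ultimately show ?thesis unfolding in_induced_copy_def by blast
qed

lemma ex_nat_full_graph:
  assumes full: "is_full V E W1 F1 W2 F2"
  shows "\<exists>(V'::nat set) E'. is_full V' E' W1 F1 W2 F2 \<and> card V' = card V"
proof -
  have "finite V" using full unfolding is_full_def simple_graph_def by blast
  then obtain h where h: "bij_betw h {0..<card V} V" using ex_bij_betw_nat_finite by blast
  define E' where "E' i j \<longleftrightarrow> i \<in> {0..<card V} \<and> j \<in> {0..<card V} \<and> E (h i) (h j)" for i j
  have edges: "\<forall>x\<in>{0..<card V}. \<forall>y\<in>{0..<card V}. E' x y \<longleftrightarrow> E (h x) (h y)"
    unfolding E'_def by blast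
  have "\<forall>x y. E x y \<longrightarrow> E y x" "\<forall>x. \<not> E x x"
    using full unfolding is_full_def simple_graph_def by blast+
  moreover have "finite {0..<card V}" by simp
  ultimately have "simple_graph {0..<card V} E'"
    unfolding simple_graph_def E'_def by blast
  moreover have "in_induced_copy {0..<card V} E' W1 F1 v \<and> in_induced_copy {0..<card V} E' W2 F2 v"
    if v: "v \<in> {0..<card V}" for v
  proof -
    have "h v \<in> V" using bij_betwE[OF h] v by blast
    then have "in_induced_copy V E W1 F1 (h v)" "in_induced_copy V E W2 F2 (h v)"
      using full unfolding is_full_def by blast+
    then show ?thesis
      using in_induced_copy_transfer[OF h edges v, of W1 F1] in_induced_copy_transfer[OF h edges v, of W2 F2]
      by blast
  qed
  ultimately have "is_full {0..<card V} E' W1 F1 W2 F2" unfolding is_full_def by blast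
  then show ?thesis by (intro exI[of _ "{0..<card V}"] exI[of _ E']) simp
qed

lemma f_full_le_card:
  assumes "is_full V E W1 F1 W2 F2" "V \<noteq> {}"
  shows "f_full W1 F1 W2 F2 \<le> card V"
proof -
  obtain V' :: "nat set" and E' where "is_full V' E' W1 F1 W2 F2" "card V' = card V"
    using ex_nat_full_graph[OF assms(1)] by blast
  moreover have "V' \<noteq> {}"
    using assms calculation unfolding is_full_def simple_graph_def by force
  ultimately show ?thesis unfolding f_full_def by (intro Least_le) blast
qed

text \<open>The hubs are split as evenly as possible between the two sides; the first side takes as
  many leaves as its windows allow (at most n - 1), the second side the rest.\<close>
lemma full_graph_of_bound_size:
  assumes m: "2 \<le> m" "m \<le> n" and k: "1 \<le> k" "k \<le> n - 1"
  shows "\<exists>(V :: window_vertex set) E.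
    is_full V E (star_V m) star_E (empty_V n) empty_E \<and> card V = n + star_empty_bound n m k"
proof -
  define c where "c = nat \<lceil>real (n - 1) / real k\<rceil>"
  define t where "t = star_empty_bound n m k"
  define a where "a = (t - k + 1) - (t - k + 1) div 2"
  define b where "b = (t - k + 1) div 2"
  define xA where "xA = min (a * k) (n - 1)"
  define xB where "xB = n - 1 + k - xA"
  define p where "p s = (if s then a else b)" for s
  define x where "x s = (if s then xA else xB)" for s
  have ceil: "c \<le> j \<longleftrightarrow> n - 1 \<le> j * k" for j
    unfolding c_def using k(1) by (intro nat_ceiling_divide_le_iff) simp
  have c: "n - 1 \<le> c * k" "1 \<le> c" using ceil[of c] ceil[of 0] m k by auto
  have t: "k + c \<le> t" "2 * m - 3 - k \<le> t"
    unfolding t_def c_def star_empty_bound_def by auto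
  have P: "a + b = t - k + 1" "b \<le> a" "2 * b \<le> t - k + 1" "t - k + 1 \<le> 2 * b + 1"
    unfolding a_def b_def by auto
  then have "1 \<le> b" "m - 1 \<le> b + k" using t c(2) by linarith+
  have "(c + 1) * k \<le> (a + b) * k" using P(1) t by (intro mult_le_mono1) linarith
  then have cover: "n - 1 + k \<le> a * k + b * k" using c(1) by (simp add: algebra_simps)
  have "1 * k \<le> a * k" using \<open>1 \<le> b\<close> P(2) by (intro mult_le_mono1) linarith
  then have xA: "k \<le> xA" "xA \<le> a * k" "xA \<le> n - 1" unfolding xA_def using k(2) by auto
  have "k \<le> b * k" using \<open>1 \<le> b\<close> by simp
  then have "xB \<le> b * k"
    unfolding xB_def xA_def using cover by (cases "a * k \<le> n - 1") (auto simp: min_def)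
  moreover have "k \<le> xB" "xA + xB = n - 1 + k" unfolding xB_def using xA(3) by auto
  ultimately have xB: "k \<le> xB" "xB \<le> b * k" "xA + xB = n - 1 + k" by blast+
  interpret window_graph p x k
    using xA xB k(1) unfolding p_def x_def by unfold_locales auto
  have "m - 1 \<le> p s + k" for s using \<open>m - 1 \<le> b + k\<close> P(2) unfolding p_def by auto
  moreover have "n + k \<le> x True + x False + 1" "1 \<le> n" using xB(3) m unfolding x_def by auto
  ultimately have "is_full V E (star_V m) star_E (empty_V n) empty_E" using m(1) by (intro is_full)
  moreover have "card V = n + t"
    using P(1) xB(3) t(1) m unfolding card_V p_def x_def by simp
  ultimately show ?thesis unfolding t_def by blast
qed

lemma star_empty_bound_n_minus_1_le:
  assumes "2 \<le> m" "m \<le> n" "n \<le> k"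
  shows "star_empty_bound n m (n - 1) \<le> star_empty_bound n m k"
proof -
  have "real (n - 1) / real (n - 1) = 1" using assms by simp
  then have "star_empty_bound n m (n - 1) = n" unfolding star_empty_bound_def using assms by simp
  moreover have "0 < k" "\<not> n - 1 \<le> 0 * k" using assms by auto
  then have "\<not> nat \<lceil>real (n - 1) / real k\<rceil> \<le> 0"
    using nat_ceiling_divide_le_iff[of k "n - 1" 0] by blast
  ultimately show ?thesis unfolding star_empty_bound_def using assms by simp
qed

lemma f_full_attained:
  assumes "is_full V E W1 F1 W2 F2" "V \<noteq> {}"
  obtains V' :: "nat set" and E'
  where "V' \<noteq> {}" "is_full V' E' W1 F1 W2 F2" "card V' = f_full W1 F1 W2 F2"
proof -
  let ?P = "\<lambda>N. \<exists>(V'::nat set) E'. V' \<noteq> {} \<and> is_full V' E' W1 F1 W2 F2 \<and> card V' = N"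
  obtain V' :: "nat set" and E' where V': "is_full V' E' W1 F1 W2 F2" "card V' = card V"
    using ex_nat_full_graph[OF assms(1)] by blast
  have "finite V" using assms(1) unfolding is_full_def simple_graph_def by blast
  then have "V' \<noteq> {}" using assms(2) V'(2) by auto
  then have "?P (card V')" using V'(1) by blast
  then have "?P (f_full W1 F1 W2 F2)" unfolding f_full_def by (rule LeastI)
  then show thesis using that by blast
qed

lemma f_full_le_bound:
  assumes "2 \<le> m" "m \<le> n" "1 \<le> k"
  shows "f_full (star_V m) star_E (empty_V n) empty_E \<le> n + star_empty_bound n m k"
proof -
  have small: "f_full (star_V m) star_E (empty_V n) empty_E \<le> n + star_empty_bound n m k'"
    if k': "1 \<le> k'" "k' \<le> n - 1" for k'
  proof -
    obtain V :: "window_vertex set" and E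
      where "is_full V E (star_V m) star_E (empty_V n) empty_E" "card V = n + star_empty_bound n m k'"
      using full_graph_of_bound_size[OF assms(1,2) k'] by blast
    moreover have "V \<noteq> {}" using calculation(2) assms by auto
    ultimately show ?thesis using f_full_le_card by metis
  qed
  show ?thesis
  proof (cases "k \<le> n - 1")
    case True
    then show ?thesis using small assms(3) by blast
  next
    case False
    then have "f_full (star_V m) star_E (empty_V n) empty_E \<le> n + star_empty_bound n m (n - 1)"
      using small[of "n - 1"] assms by simp
    also have "\<dots> \<le> n + star_empty_bound n m k"
      using star_empty_bound_n_minus_1_le assms False by simp
    finally show ?thesis .
  qed
qed

lemma f_full_ge_bound:
  assumes "2 \<le> m" "m \<le> n"
  shows "\<exists>k\<ge>1. n + star_empty_bound n m k \<le> f_full (star_V m) star_E (empty_V n) empty_E"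
proof -
  have "1 \<le> n - 1" using assms by simp
  then obtain V :: "window_vertex set" and E where "is_full V E (star_V m) star_E (empty_V n) empty_E"
      "card V = n + star_empty_bound n m 1"
    using full_graph_of_bound_size[OF assms order_refl] by blast
  moreover have "V \<noteq> {}" using calculation(2) assms by auto
  ultimately obtain V' :: "nat set" and E' where "V' \<noteq> {}"
      and full: "is_full V' E' (star_V m) star_E (empty_V n) empty_E"
      and card: "card V' = f_full (star_V m) star_E (empty_V n) empty_E"
    using f_full_attained by metis
  interpret star_empty_full V' E' m n using star_empty_fullI[OF full assms(1)] .
  show ?thesis using card_V_ge_star_empty_bound[OF \<open>V' \<noteq> {}\<close>] card by simp
qed

theorem theorem4p4:
  fixes n m :: nat
  assumes "2 \<le> m" and "m \<le> n"
  shows "f_full (star_V m) star_E (empty_V n) empty_E =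
    n + (LEAST x. \<exists>k::nat. k \<ge> 1 \<and>
           x = max (k + nat \<lceil>real (n - 1) / real k\<rceil>) (2 * m - 3 - k))"
proof -
  let ?P = "\<lambda>x. \<exists>k::nat. k \<ge> 1 \<and> x = star_empty_bound n m k"
  have "?P (LEAST x. ?P x)" by (rule LeastI[of ?P "star_empty_bound n m 1"]) auto
  then obtain k0 where "k0 \<ge> 1" "(LEAST x. ?P x) = star_empty_bound n m k0" by blast
  then have "f_full (star_V m) star_E (empty_V n) empty_E \<le> n + (LEAST x. ?P x)"
    using f_full_le_bound[OF assms] by simp
  moreover obtain k where "k \<ge> 1" "n + star_empty_bound n m k \<le> f_full (star_V m) star_E (empty_V n) empty_E"
    using f_full_ge_bound[OF assms] by blast
  moreover have "(LEAST x. ?P x) \<le> star_empty_bound n m k" using \<open>k \<ge> 1\<close> by (intro Least_le) blast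
  ultimately show ?thesis unfolding star_empty_bound_def by linarith
qed

end
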